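(* For every constant $c>0$ there exists a constant $C>0$ such that the following holds. Let $G=(V,E)$ be a $d$-regular undirected graph on $n=|V|$ vertices, $2\le d<n$, which is a $\lambda$ spectral expander with $\lambda>0$ and $n\ge c\,d^3\log(d)/\lambda$. Then the graph code $(\mathrm{enc}_G,\mathrm{dec}_G)$ is an $\varepsilon$-non-malleable code in the split-state model with $\varepsilon\le C\,\frac{\lambda^{3/2}}{d}$. (In the paper's notation: if $n=\Omega(d^3\log(d)/\lambda)$ then the code is $O(\lambda^{3/2}/d)$-non-malleable.)
   Context: $E\subseteq V\times V$ is the symmetric set of ordered pairs of adjacent vertices. $G$ is a $\lambda$ spectral expander if, with $\lambda_1\ge\dots\ge\lambda_n$ the eigenvalues of its adjacency matrix, $\lambda\ge\max\{|\lambda_2|,\dots,|\lambda_n|\}$. The graph code: $\mathrm{enc}_G\colon\{0,1\}\to V\times V$ is randomized, with $\mathrm{enc}_G(0)$ uniform on $(V\times V)\setminus E$ and $\mathrm{enc}_G(1)$ uniform on $E$; $\mathrm{dec}_G(v_1,v_2)=1$ if $(v_1,v_2)\in E$ and $0$ otherwise. Split-state non-malleability: a coding scheme $\mathrm{enc}\colon\mathcal M\to\mathcal L\times\mathcal R$, $\mathrm{dec}\colon\mathcal L\times\mathcal R\to\mathcal M\cup\{\bot\}$ (here $\mathcal M=\{0,1\}$, $\mathcal L=\mathcal R=V$) with $\Pr[\mathrm{dec}(\mathrm{enc}(s))=s]=1$ is $\varepsilon$-non-malleable in the split-state model if for every pair of functions $g\colon\mathcal L\to\mathcal L$, $h\colon\mathcal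 R\to\mathcal R$ there is a distribution $D_{g,h}$ on $\mathcal M\cup\{*,\bot\}$ such that for every $s\in\mathcal M$ the random variable $\mathrm{dec}(g(L),h(R))$ with $(L,R)\leftarrow\mathrm{enc}(s)$ and the random variable obtained by sampling $\tilde s\leftarrow D_{g,h}$ and outputting $s$ if $\tilde s=*$ and $\tilde s$ otherwise, have statistical distance at most $\varepsilon$. *)

theory Defs
  imports "HOL-Probability.Probability" "Jordan_Normal_Form.Char_Poly"
begin

definition undirected_graph :: "nat \<Rightarrow> (nat \<times> nat) set \<Rightarrow> bool" where
  "undirected_graph n E \<longleftrightarrow> E \<subseteq> {0..<n} \<times> {0..<n} \<and> sym E \<and> irrefl E"

definition regular_graph :: "nat \<Rightarrow> nat \<Rightarrow> (nat \<times> nat) set \<Rightarrow> bool" where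
  "regular_graph n d E \<longleftrightarrow> undirected_graph n E \<and> (\<forall>v<n. card {u. (v, u) \<in> E} = d)"

definition adj_matrix :: "nat \<Rightarrow> (nat \<times> nat) set \<Rightarrow> real mat" where
  "adj_matrix n E = mat n n (\<lambda>(i, j). if (i, j) \<in> E then 1 else 0)"

text \<open>The eigenvalues of the adjacency matrix, with multiplicity, listed in
  non-increasing order: lambda_1 >= ... >= lambda_n (they are real, the matrix being
  real symmetric).\<close>
definition adj_eigenvalues :: "nat \<Rightarrow> (nat \<times> nat) set \<Rightarrow> real list \<Rightarrow> bool" where
  "adj_eigenvalues n E es \<longleftrightarrow> length es = n \<and> sorted (rev es) \<and>
     char_poly (adj_matrix n E) = (\<Prod>e\<leftarrow>es. [:- e, 1:])"

text \<open>lambda spectral expander: lambda >= max {|lambda_2|, ..., |lambda_n|}.\<close>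
definition spectral_expander :: "nat \<Rightarrow> (nat \<times> nat) set \<Rightarrow> real \<Rightarrow> bool" where
  "spectral_expander n E lam \<longleftrightarrow>
     (\<exists>es. adj_eigenvalues n E es \<and> (\<forall>i\<in>{1..<n}. \<bar>es ! i\<bar> \<le> lam))"

definition graph_enc :: "nat \<Rightarrow> (nat \<times> nat) set \<Rightarrow> bool \<Rightarrow> (nat \<times> nat) pmf" where
  "graph_enc n E b = (if b then pmf_of_set E else pmf_of_set (({0..<n} \<times> {0..<n}) - E))"

definition graph_dec :: "(nat \<times> nat) set \<Rightarrow> nat \<Rightarrow> nat \<Rightarrow> bool option" where
  "graph_dec E v1 v2 = Some ((v1, v2) \<in> E)"

text \<open>Decoder outputs are 'm option, None standing for \<bottom>. The simulator
  distribution ranges over M \<union> {*, \<bottom>}.\<close>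
datatype 'm nm_out = Msg 'm | Same | Bot

definition stat_dist :: "'a pmf \<Rightarrow> 'a pmf \<Rightarrow> real" where
  "stat_dist p q = (SUP A. \<bar>measure_pmf.prob p A - measure_pmf.prob q A\<bar>)"

definition nm_sim :: "'m \<Rightarrow> 'm nm_out \<Rightarrow> 'm option" where
  "nm_sim s t = (case t of Same \<Rightarrow> Some s | Msg m \<Rightarrow> Some m | Bot \<Rightarrow> None)"

definition split_state_nm ::
  "('m \<Rightarrow> ('l \<times> 'r) pmf) \<Rightarrow> ('l \<Rightarrow> 'r \<Rightarrow> 'm option) \<Rightarrow> 'l set \<Rightarrow> 'r set \<Rightarrow> real \<Rightarrow> bool" where
  "split_state_nm enc dec Ls Rs eps \<longleftrightarrow>
     (\<forall>s. set_pmf (enc s) \<subseteq> Ls \<times> Rs) \<and>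
     (\<forall>s. measure_pmf.prob (enc s) {(l, r). dec l r = Some s} = 1) \<and>
     (\<forall>g \<in> Ls \<rightarrow> Ls. \<forall>h \<in> Rs \<rightarrow> Rs. \<exists>D :: 'm nm_out pmf. \<forall>s.
        stat_dist (map_pmf (\<lambda>(l, r). dec (g l) (h r)) (enc s)) (map_pmf (nm_sim s) D) \<le> eps)"

end

(*
  For tampering functions g and h let p_s be the probability that (g L, h R) is an edge when
  (L, R) encodes the bit s. The simulator answering 1 with probability min p_0 p_1, "same" with
  probability p_1 - min p_0 p_1 and 0 otherwise is exact for s = 1 and errs by max 0 (p_0 - p_1)
  for s = 0; this error equals G / (d (n - d)) for the edge bias
  G = sum_{u,v} A(g u, h v) (d/n - A(u, v)).

  Grouping u and v by their images turns G into a bilinear form in the fibre sizes of g and h.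
  With the threshold T = (d/lam)^2, pairs of light fibres contribute at most d^2 + d^3/lam by the
  expander mixing lemma, and pairs involving a heavy fibre at most lam n sqrt (2 lam) each, by the
  mixing lemma on single fibres followed by Cauchy-Schwarz. Dividing by d (n - d) gives
  O(lam^(3/2) / d) when n = Omega(d^3 log d / lam) and n >= 2d; when n < 2d the same hypothesis
  forces the bound to exceed 1.

  The mixing lemma rests on |(A - (d/n) J) x| <= lam |x|, proved without diagonalising A: by the
  Schur decomposition the trace of (A - (d/n) J)^(2k) is sum_i e_i^(2k) - d^(2k) <= n lam^(2k),
  and as k |-> |(A - (d/n) J)^k x|^2 is log-convex, this growth bound already bounds k = 1.
*)

theory Submission
  imports Defs "Jordan_Normal_Form.Schur_Decomposition"
begin

unbundle no vec_syntax \<comment> \<open>\<open>$\<close> is vector indexing of \<open>Jordan_Normal_Form\<close> below\<close>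

section \<open>Powers and traces of square matrices\<close>

text \<open>An \<open>n \<times> n\<close> matrix is represented by the function giving its entries at indices
  below \<open>n\<close>; values at other indices are irrelevant.\<close>

fun arr_pow :: "nat \<Rightarrow> (nat \<Rightarrow> nat \<Rightarrow> 'a::comm_semiring_1) \<Rightarrow> nat \<Rightarrow> nat \<Rightarrow> nat \<Rightarrow> 'a" where
  "arr_pow n M 0 i j = (if i = j then 1 else 0)"
| "arr_pow n M (Suc k) i j = (\<Sum>l<n. M i l * arr_pow n M k l j)"

lemma sum_arr_pow_0_left:
  assumes "i < n"
  shows "(\<Sum>l<n. arr_pow n M 0 i l * f l) = f i"
proof -
  have "(\<Sum>l<n. arr_pow n M 0 i l * f l) = (\<Sum>l<n. if l = i then f l else 0)"
    by (rule sum.cong) auto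
  then show ?thesis using assms by simp
qed

lemma arr_pow_add:
  assumes "i < n"
  shows "arr_pow n M (a + b) i j = (\<Sum>l<n. arr_pow n M a i l * arr_pow n M b l j)"
  using assms
proof (induction a arbitrary: i)
  case 0
  then show ?case by (simp only: add_0 sum_arr_pow_0_left)
next
  case (Suc a)
  have "arr_pow n M (Suc a + b) i j = (\<Sum>l<n. M i l * (\<Sum>m<n. arr_pow n M a l m * arr_pow n M b m j))"
    using Suc.IH by simp
  also have "\<dots> = (\<Sum>l<n. \<Sum>m<n. M i l * arr_pow n M a l m * arr_pow n M b m j)"
    by (simp add: sum_distrib_left mult.assoc)
  also have "\<dots> = (\<Sum>m<n. \<Sum>l<n. M i l * arr_pow n M a l m * arr_pow n M b m j)"
    by (rule sum.swap)
  also have "\<dots> = (\<Sum>m<n. (\<Sum>l<n. M i l * arr_pow n M a l m) * arr_pow n M b m j)"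
    by (simp add: sum_distrib_right)
  finally show ?case by simp
qed

lemma arr_pow_1 [simp]: "j < n \<Longrightarrow> arr_pow n M 1 i j = M i j"
  by (simp add: if_distrib cong: if_cong)

lemma arr_pow_Suc_right:
  assumes "i < n" "j < n"
  shows "arr_pow n M (Suc k) i j = (\<Sum>l<n. arr_pow n M k i l * M l j)"
proof -
  have "arr_pow n M (k + 1) i j = (\<Sum>l<n. arr_pow n M k i l * arr_pow n M 1 l j)"
    by (rule arr_pow_add[OF assms(1)])
  also have "\<dots> = (\<Sum>l<n. arr_pow n M k i l * M l j)"
    by (simp only: arr_pow_1[OF assms(2)])
  finally show ?thesis by (simp only: Suc_eq_plus1)
qed

lemma arr_pow_cong:
  assumes "\<And>i j. i < n \<Longrightarrow> j < n \<Longrightarrow> M i j = M' i j" and "i < n"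
  shows "arr_pow n M k i j = arr_pow n M' k i j"
  using assms(2) by (induction k arbitrary: i) (auto simp: assms(1) intro!: sum.cong)

lemma arr_pow_sym:
  assumes sym: "\<And>i j. i < n \<Longrightarrow> j < n \<Longrightarrow> M i j = M j i" and "i < n" "j < n"
  shows "arr_pow n M k i j = arr_pow n M k j i"
  using assms(2,3)
proof (induction k arbitrary: i j)
  case (Suc k)
  have "arr_pow n M (Suc k) i j = (\<Sum>l<n. arr_pow n M k j l * M l i)"
    using Suc by (auto simp: sym mult.commute intro!: sum.cong)
  also have "\<dots> = arr_pow n M (Suc k) j i"
    using arr_pow_Suc_right[of j n i M k] Suc.prems by simp
  finally show ?case .
qed simp

lemma index_pow_mat_eq_arr_pow:
  assumes "A \<in> carrier_mat n n" "i < n" "j < n"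
  shows "(A ^\<^sub>m k) $$ (i, j) = arr_pow n (\<lambda>i j. A $$ (i, j)) k i j"
  using assms(3)
proof (induction k arbitrary: j)
  case (Suc k)
  have "(A ^\<^sub>m Suc k) $$ (i, j) = (\<Sum>l<n. (A ^\<^sub>m k) $$ (i, l) * A $$ (l, j))"
    using assms Suc.prems by (simp add: scalar_prod_def atLeast0LessThan)
  also have "\<dots> = (\<Sum>l<n. arr_pow n (\<lambda>i j. A $$ (i, j)) k i l * A $$ (l, j))"
    using Suc.IH by (simp del: arr_pow.simps)
  also have "\<dots> = arr_pow n (\<lambda>i j. A $$ (i, j)) (Suc k) i j"
    by (rule arr_pow_Suc_right[symmetric, OF assms(2) Suc.prems])
  finally show ?case .
qed (use assms in simp)

definition mat_trace :: "'a::comm_ring_1 mat \<Rightarrow> 'a" where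
  "mat_trace A = (\<Sum>i<dim_row A. A $$ (i, i))"

lemma mat_trace_mult_comm:
  assumes "A \<in> carrier_mat n m" "B \<in> carrier_mat m n"
  shows "mat_trace (A * B) = mat_trace (B * A)"
proof -
  have "mat_trace (A * B) = (\<Sum>i<n. \<Sum>k<m. A $$ (i, k) * B $$ (k, i))"
    using assms by (simp add: mat_trace_def scalar_prod_def atLeast0LessThan)
  also have "\<dots> = (\<Sum>k<m. \<Sum>i<n. B $$ (k, i) * A $$ (i, k))"
    by (subst sum.swap) (simp add: mult.commute)
  also have "\<dots> = mat_trace (B * A)"
    using assms by (simp add: mat_trace_def scalar_prod_def atLeast0LessThan)
  finally show ?thesis .
qed

lemma upper_triangular_pow_mat:
  assumes B: "B \<in> carrier_mat n n" and ut: "upper_triangular B"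
  shows "upper_triangular (B ^\<^sub>m k) \<and> (\<forall>i<n. (B ^\<^sub>m k) $$ (i, i) = B $$ (i, i) ^ k)"
proof (induction k)
  case 0
  then show ?case using B by simp
next
  case (Suc k)
  have B0: "B $$ (i, j) = 0" and Bk0: "(B ^\<^sub>m k) $$ (i, j) = 0" if "j < i" "i < n" for i j
    using upper_triangularD[OF ut that(1)] upper_triangularD[OF conjunct1[OF Suc.IH] that(1)] B that(2)
    by simp_all
  have entry: "(B ^\<^sub>m Suc k) $$ (i, j) = (\<Sum>l<n. (B ^\<^sub>m k) $$ (i, l) * B $$ (l, j))"
    if "i < n" "j < n" for i j
    using B that by (simp add: scalar_prod_def atLeast0LessThan)
  have lower: "(B ^\<^sub>m Suc k) $$ (i, j) = 0" if "j < i" "i < n" for i j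
  proof -
    have "(B ^\<^sub>m k) $$ (i, l) * B $$ (l, j) = 0" if "l < n" for l
      using B0[of j l] Bk0[of l i] \<open>j < i\<close> \<open>i < n\<close> that by (cases "l < i") auto
    then show ?thesis using entry[of i j] that by simp
  qed
  have diag: "(B ^\<^sub>m Suc k) $$ (i, i) = B $$ (i, i) ^ Suc k" if "i < n" for i
  proof -
    have "(B ^\<^sub>m k) $$ (i, l) * B $$ (l, i) = (if l = i then B $$ (i, i) ^ k * B $$ (i, i) else 0)"
      if "l < n" for l
      using B0[of i l] Bk0[of l i] Suc.IH \<open>i < n\<close> that by (cases "l < i"; cases "l = i") auto
    then show ?thesis using entry[of i i] that by (simp add: power_Suc2 del: power_Suc)
  qed
  have "upper_triangular (B ^\<^sub>m Suc k)"
    by (intro upper_triangularI) (metis lower pow_mat_dim_square(1)[OF B])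
  with diag show ?case by blast
qed

lemma mat_trace_pow_eq_sum_eigenvalues:
  fixes A :: "'a::conjugatable_ordered_field mat"
  assumes A: "A \<in> carrier_mat n n" and cp: "char_poly A = (\<Prod>e\<leftarrow>es. [:- e, 1:])"
  shows "mat_trace (A ^\<^sub>m k) = (\<Sum>e\<leftarrow>es. e ^ k)"
proof -
  obtain B P Q where "schur_decomposition A es = (B, P, Q)"
    by (cases "schur_decomposition A es") auto
  from schur_decomposition[OF A cp this]
  have wit: "similar_mat_wit A B P Q" and ut: "upper_triangular B" and diag: "diag_mat B = es"
    by auto
  from wit A have B: "B \<in> carrier_mat n n" and P: "P \<in> carrier_mat n n"
    and Q: "Q \<in> carrier_mat n n" and QP: "Q * P = 1\<^sub>m n"
    unfolding similar_mat_wit_def Let_def by auto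
  have "mat_trace (A ^\<^sub>m k) = mat_trace ((P * B ^\<^sub>m k) * Q)"
    using similar_mat_wit_pow_id[OF wit] by simp
  also have "\<dots> = mat_trace (Q * (P * B ^\<^sub>m k))"
    using P Q B by (intro mat_trace_mult_comm) auto
  also have "Q * (P * B ^\<^sub>m k) = (Q * P) * B ^\<^sub>m k"
    using assoc_mult_mat[OF Q P pow_carrier_mat[OF B]] by simp
  also have "\<dots> = B ^\<^sub>m k"
    using QP B by simp
  also have "mat_trace (B ^\<^sub>m k) = (\<Sum>i<n. B $$ (i, i) ^ k)"
    using upper_triangular_pow_mat[OF B ut, of k] B by (simp add: mat_trace_def)
  also have "\<dots> = (\<Sum>e\<leftarrow>es. e ^ k)"
  proof -
    have "es = map (\<lambda>i. B $$ (i, i)) [0..<n]"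
      using diag B by (simp add: diag_mat_def)
    then have "(\<Sum>e\<leftarrow>es. e ^ k) = (\<Sum>i\<leftarrow>[0..<n]. B $$ (i, i) ^ k)"
      by (simp add: o_def)
    also have "\<dots> = (\<Sum>i<n. B $$ (i, i) ^ k)"
      by (simp only: interv_sum_list_conv_sum_set_nat set_upt atLeast0LessThan)
    finally show ?thesis ..
  qed
  finally show ?thesis .
qed

section \<open>Regular graphs and their adjacency arrays\<close>

definition adj :: "(nat \<times> nat) set \<Rightarrow> nat \<Rightarrow> nat \<Rightarrow> real" where
  "adj E i j = of_bool ((i, j) \<in> E)"

lemma regular_graph_edges_subset: "regular_graph n d E \<Longrightarrow> E \<subseteq> {..<n} \<times> {..<n}"
  unfolding regular_graph_def undirected_graph_def by auto

lemma adj_sym: "regular_graph n d E \<Longrightarrow> adj E i j = adj E j i"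
  unfolding regular_graph_def undirected_graph_def adj_def sym_def by auto

lemma adj_nonneg [simp]: "0 \<le> adj E i j"
  by (simp add: adj_def)

lemma adj_square [simp]: "adj E i j ^ 2 = adj E i j"
  by (simp add: adj_def)

lemma adj_row_sum:
  assumes reg: "regular_graph n d E" and "i < n"
  shows "(\<Sum>j<n. adj E i j) = real d"
proof -
  have "{..<n} \<inter> {j. (i, j) \<in> E} = {j. (i, j) \<in> E}"
    using regular_graph_edges_subset[OF reg] by auto
  then show ?thesis
    using reg \<open>i < n\<close> by (simp add: adj_def regular_graph_def)
qed

lemma index_adj_matrix: "i < n \<Longrightarrow> j < n \<Longrightarrow> adj_matrix n E $$ (i, j) = adj E i j"
  by (simp add: adj_matrix_def adj_def)

lemma adj_matrix_carrier: "adj_matrix n E \<in> carrier_mat n n"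
  by (simp add: adj_matrix_def)

lemma card_eq_sum_indicator:
  fixes n m :: nat
  assumes "T \<subseteq> {..<n} \<times> {..<m}"
  shows "real (card T) = (\<Sum>u<n. \<Sum>v<m. of_bool ((u, v) \<in> T))"
proof -
  have "real (card T) = (\<Sum>x\<in>{..<n} \<times> {..<m} \<inter> T. 1)"
    using assms by (simp add: Int_absorb1)
  also have "\<dots> = (\<Sum>x\<in>{..<n} \<times> {..<m}. of_bool (x \<in> T))"
    by (subst sum.inter_restrict) (simp_all add: of_bool_def)
  also have "\<dots> = (\<Sum>(u, v)\<in>{..<n} \<times> {..<m}. of_bool ((u, v) \<in> T))"
    by (rule sum.cong) auto
  also have "\<dots> = (\<Sum>u<n. \<Sum>v<m. of_bool ((u, v) \<in> T))"
    by (rule sum.cartesian_product[symmetric])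
  finally show ?thesis .
qed

lemma card_edges: "regular_graph n d E \<Longrightarrow> real (card E) = real n * real d"
  using card_eq_sum_indicator[OF regular_graph_edges_subset] adj_row_sum
  by (simp add: adj_def[symmetric])

lemma eigenvalue_abs_le_degree:
  assumes reg: "regular_graph n d E" and ev: "eigenvalue (adj_matrix n E) e"
  shows "\<bar>e\<bar> \<le> real d"
proof -
  obtain v where "eigenvector (adj_matrix n E) v e"
    using ev unfolding eigenvalue_def by auto
  then have v: "v \<in> carrier_vec n" and v0: "v \<noteq> 0\<^sub>v n" and Av: "adj_matrix n E *\<^sub>v v = e \<cdot>\<^sub>v v"
    using adj_matrix_carrier[of n E] unfolding eigenvector_def by auto
  obtain j where j: "j < n" "v $ j \<noteq> 0"
    using v v0 by (metis eq_vecI carrier_vecD index_zero_vec)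
  then have n: "n \<noteq> 0" by auto
  obtain i where i: "i < n" and i_max: "\<bar>v $ i\<bar> = Max ((\<lambda>j. \<bar>v $ j\<bar>) ` {..<n})"
    using Max_in[of "(\<lambda>j. \<bar>v $ j\<bar>) ` {..<n}"] n by fastforce
  have max: "\<bar>v $ j\<bar> \<le> \<bar>v $ i\<bar>" if "j < n" for j
    using i_max that by simp
  have vi: "\<bar>v $ i\<bar> > 0"
    using max[of j] j by linarith
  have "e * v $ i = (adj_matrix n E *\<^sub>v v) $ i"
    using Av i v by simp
  also have "\<dots> = (\<Sum>j<n. adj_matrix n E $$ (i, j) * v $ j)"
    using i v adj_matrix_carrier[of n E] by (simp add: scalar_prod_def atLeast0LessThan)
  also have "\<dots> = (\<Sum>j<n. adj E i j * v $ j)"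
    by (intro sum.cong) (simp_all add: index_adj_matrix i)
  finally have eigen_eq: "e * v $ i = (\<Sum>j<n. adj E i j * v $ j)" .
  have "\<bar>e\<bar> * \<bar>v $ i\<bar> = \<bar>\<Sum>j<n. adj E i j * v $ j\<bar>"
    by (simp only: eigen_eq[symmetric] abs_mult)
  also have "\<dots> \<le> (\<Sum>j<n. adj E i j * \<bar>v $ j\<bar>)"
    using sum_abs[of "\<lambda>j. adj E i j * v $ j" "{..<n}"] by (simp add: abs_mult)
  also have "\<dots> \<le> (\<Sum>j<n. adj E i j * \<bar>v $ i\<bar>)"
    by (intro sum_mono mult_left_mono max) simp_all
  also have "\<dots> = real d * \<bar>v $ i\<bar>"
    using adj_row_sum[OF reg i] by (simp add: sum_distrib_right[symmetric])
  finally show ?thesis using vi by simp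
qed

section \<open>The spectral bound for the centred adjacency matrix\<close>

lemma arr_pow_adj_row_sum:
  assumes reg: "regular_graph n d E" and "i < n"
  shows "(\<Sum>j<n. arr_pow n (adj E) k i j) = real d ^ k"
  using assms(2)
proof (induction k arbitrary: i)
  case (Suc k)
  have "(\<Sum>j<n. arr_pow n (adj E) (Suc k) i j) = (\<Sum>j<n. \<Sum>l<n. adj E i l * arr_pow n (adj E) k l j)"
    by simp
  also have "\<dots> = (\<Sum>l<n. \<Sum>j<n. adj E i l * arr_pow n (adj E) k l j)"
    by (rule sum.swap)
  also have "\<dots> = (\<Sum>l<n. adj E i l * real d ^ k)"
    by (intro sum.cong) (simp_all add: Suc.IH flip: sum_distrib_left)
  also have "\<dots> = real d ^ Suc k"
    using adj_row_sum[OF reg Suc.prems] by (simp flip: sum_distrib_right)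
  finally show ?case .
qed simp

lemma arr_pow_adj_sym:
  "regular_graph n d E \<Longrightarrow> i < n \<Longrightarrow> j < n \<Longrightarrow> arr_pow n (adj E) k i j = arr_pow n (adj E) k j i"
  by (rule arr_pow_sym) (auto intro: adj_sym)

lemma arr_pow_adj_col_sum:
  assumes reg: "regular_graph n d E" and "j < n"
  shows "(\<Sum>i<n. arr_pow n (adj E) k i j) = real d ^ k"
  using arr_pow_adj_row_sum[OF reg assms(2), of k] arr_pow_adj_sym[OF reg _ assms(2)] by simp

text \<open>As all row and column sums of the adjacency array are \<open>d\<close>, centring removes exactly
  the top eigenvalue \<open>d\<close> from the traces of the powers.\<close>

lemma arr_pow_centered_adj:
  assumes reg: "regular_graph n d E" and "0 < m" "i < n" "j < n"
  shows "arr_pow n (\<lambda>i j. adj E i j - real d / real n) m i j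
    = arr_pow n (adj E) m i j - real d ^ m / real n"
  using assms(2,3)
proof (induction m arbitrary: i rule: nat_induct_non_zero)
  case 1
  show ?case by (simp only: arr_pow_1[OF assms(4)] power_one_right)
next
  case (Suc m)
  let ?c = "real d / real n" and ?cm = "real d ^ m / real n" and ?P = "arr_pow n (adj E) m"
  have "arr_pow n (\<lambda>i j. adj E i j - ?c) (Suc m) i j
      = (\<Sum>l<n. (adj E i l - ?c) * (?P l j - ?cm))"
    by (simp add: Suc.IH)
  also have "\<dots> = (\<Sum>l<n. adj E i l * ?P l j) - ?cm * (\<Sum>l<n. adj E i l) - ?c * (\<Sum>l<n. ?P l j)
      + real n * ?c * ?cm"
    by (simp add: algebra_simps sum.distrib sum_subtractf sum_distrib_left sum_divide_distrib)
  also have "\<dots> = arr_pow n (adj E) (Suc m) i j - real d ^ Suc m / real n"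
    using adj_row_sum[OF reg Suc.prems] arr_pow_adj_col_sum[OF reg assms(4)] Suc.prems
    by (simp add: field_simps)
  finally show ?case .
qed

lemma sum_diag_arr_pow_adj:
  assumes "adj_eigenvalues n E es"
  shows "(\<Sum>i<n. arr_pow n (adj E) k i i) = (\<Sum>e\<leftarrow>es. e ^ k)"
proof -
  have "arr_pow n (adj E) k i i = (adj_matrix n E ^\<^sub>m k) $$ (i, i)" if "i < n" for i
  proof -
    have "(adj_matrix n E ^\<^sub>m k) $$ (i, i) = arr_pow n (\<lambda>i j. adj_matrix n E $$ (i, j)) k i i"
      by (rule index_pow_mat_eq_arr_pow[OF adj_matrix_carrier that that])
    also have "\<dots> = arr_pow n (adj E) k i i"
      by (rule arr_pow_cong[OF _ that]) (simp add: index_adj_matrix)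
    finally show ?thesis ..
  qed
  then have "(\<Sum>i<n. arr_pow n (adj E) k i i) = mat_trace (adj_matrix n E ^\<^sub>m k)"
    using carrier_matD(1)[OF adj_matrix_carrier] by (simp add: mat_trace_def)
  also have "\<dots> = (\<Sum>e\<leftarrow>es. e ^ k)"
    using assms unfolding adj_eigenvalues_def
    by (simp add: mat_trace_pow_eq_sum_eigenvalues[OF adj_matrix_carrier])
  finally show ?thesis .
qed

lemma even_power_le:
  fixes x y :: "'a::linordered_idom"
  assumes "even m" "\<bar>x\<bar> \<le> y"
  shows "x ^ m \<le> y ^ m"
proof -
  have "x ^ m = \<bar>x\<bar> ^ m" by (rule power_even_abs[OF assms(1), symmetric])
  also have "\<dots> \<le> y ^ m" by (rule power_mono[OF assms(2) abs_ge_zero])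
  finally show ?thesis .
qed

lemma trace_centered_adj_pow_le:
  assumes reg: "regular_graph n d E" and es: "adj_eigenvalues n E es"
    and tail: "\<forall>i\<in>{1..<n}. \<bar>es ! i\<bar> \<le> lam" and m: "even m" "0 < m"
  shows "(\<Sum>i<n. arr_pow n (\<lambda>i j. adj E i j - real d / real n) m i i) \<le> real n * lam ^ m"
proof (cases "n = 0")
  case False
  obtain e0 rest where es_eq: "es = e0 # rest" and len: "length rest = n - 1"
    using es False unfolding adj_eigenvalues_def by (cases es) auto
  have "poly (char_poly (adj_matrix n E)) e0 = 0"
    using es es_eq unfolding adj_eigenvalues_def by (simp add: poly_prod_list)
  then have "eigenvalue (adj_matrix n E) e0"
    by (simp add: eigenvalue_root_char_poly[OF adj_matrix_carrier])
  then have "\<bar>e0\<bar> \<le> real d"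
    by (rule eigenvalue_abs_le_degree[OF reg])
  then have e0: "e0 ^ m \<le> real d ^ m"
    by (rule even_power_le[OF m(1)])
  have "e ^ m \<le> lam ^ m" if e: "e \<in> set rest" for e
  proof -
    obtain i where "i < length rest" "e = rest ! i"
      using e by (auto simp: in_set_conv_nth)
    then have "\<bar>e\<bar> \<le> lam"
      using tail[rule_format, of "Suc i"] len es_eq by auto
    then show ?thesis
      by (rule even_power_le[OF m(1)])
  qed
  then have rest: "(\<Sum>e\<leftarrow>rest. e ^ m) \<le> real (n - 1) * lam ^ m"
    using sum_list_mono[of rest "\<lambda>e. e ^ m" "\<lambda>_. lam ^ m"] len by (simp add: sum_list_triv)
  have "(\<Sum>i<n. arr_pow n (\<lambda>i j. adj E i j - real d / real n) m i i)
      = (\<Sum>i<n. arr_pow n (adj E) m i i - real d ^ m / real n)"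
    using m(2) by (intro sum.cong refl arr_pow_centered_adj[OF reg]) auto
  also have "\<dots> = (\<Sum>e\<leftarrow>es. e ^ m) - real d ^ m"
    using False by (simp add: sum_subtractf sum_diag_arr_pow_adj[OF es])
  also have "\<dots> \<le> real (n - 1) * lam ^ m"
    using e0 rest es_eq by simp
  also have "\<dots> \<le> real n * lam ^ m"
    using zero_le_even_power[OF m(1), of lam] by (intro mult_right_mono) auto
  finally show ?thesis .
qed simp

lemma sum_sq_arr_pow_eq_diag:
  assumes sym: "\<And>i j. i < n \<Longrightarrow> j < n \<Longrightarrow> M i j = M j i" and "i < n"
  shows "(\<Sum>j<n. (arr_pow n M k i j)\<^sup>2) = arr_pow n M (k + k) i i"
  using arr_pow_add[OF assms(2), of M k k i] arr_pow_sym[OF sym assms(2)]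
  by (auto simp: power2_eq_square intro!: sum.cong)

lemma log_convex_geometric_lower_bound:
  fixes a :: "nat \<Rightarrow> real"
  assumes log_convex: "\<And>k. (a (Suc k))\<^sup>2 \<le> a k * a (Suc (Suc k))"
    and a0: "0 < a 0" and a1: "0 < a 1"
  shows "(a 1 / a 0) ^ k * a 0 \<le> a k"
proof -
  define r where "r = a 1 / a 0"
  have r: "0 < r" using a1 a0 by (simp add: r_def)
  have step: "0 < a k \<and> r * a k \<le> a (Suc k)" for k
  proof (induction k)
    case 0
    then show ?case using a0 by (simp add: r_def)
  next
    case (Suc k)
    then have ak: "0 < a k" and ge: "r * a k \<le> a (Suc k)" by auto
    have aSk: "0 < a (Suc k)" using ge ak r by (smt (verit) mult_pos_pos)
    have "a k * (r * a (Suc k)) = a (Suc k) * (r * a k)" by simp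
    also have "\<dots> \<le> a (Suc k) * a (Suc k)" using ge aSk by simp
    also have "\<dots> \<le> a k * a (Suc (Suc k))" using log_convex[of k] by (simp add: power2_eq_square)
    finally have "r * a (Suc k) \<le> a (Suc (Suc k))" using ak by simp
    with aSk show ?case by simp
  qed
  show ?thesis
    unfolding r_def[symmetric]
    by (induction k) (auto intro: order.trans[OF _ conjunct2[OF step]] simp: r mult.assoc)
qed

lemma log_convex_first_ratio_le:
  fixes a :: "nat \<Rightarrow> real"
  assumes nonneg: "\<And>k. 0 \<le> a k"
    and log_convex: "\<And>k. (a (Suc k))\<^sup>2 \<le> a k * a (Suc (Suc k))"
    and growth: "\<And>k. 1 \<le> k \<Longrightarrow> a k \<le> N * L ^ k * a 0"
    and L: "0 \<le> L"
  shows "a 1 \<le> L * a 0"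
proof (cases "a 1 = 0")
  case True
  then show ?thesis using nonneg[of 0] L by simp
next
  case False
  then have a1: "0 < a 1" using nonneg[of 1] by simp
  then have a0: "0 < a 0"
    using log_convex[of 0] nonneg[of 0] nonneg[of 2]
    by (metis One_nat_def numeral_2_eq_2 mult_eq_0_iff order_le_less zero_less_power2 not_le)
  define r where "r = a 1 / a 0"
  have r: "0 < r" using a1 a0 by (simp add: r_def)
  have power_le: "r ^ k \<le> N * L ^ k" if "1 \<le> k" for k
  proof -
    have "r ^ k * a 0 \<le> N * L ^ k * a 0"
      using log_convex_geometric_lower_bound[OF log_convex a0 a1, of k] growth[OF that]
      unfolding r_def by linarith
    then show ?thesis using a0 by simp
  qed
  have "r \<le> L"
  proof (rule ccontr)
    assume "\<not> r \<le> L"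
    show False
    proof (cases "L = 0")
      case True
      then show False using power_le[of 1] r by simp
    next
      case False
      with L \<open>\<not> r \<le> L\<close> have "0 < L" "1 < r / L" by auto
      then obtain k where "N < (r / L) ^ k"
        using real_arch_pow by blast
      also have "\<dots> \<le> (r / L) ^ Suc k"
        using \<open>1 < r / L\<close> by (intro power_increasing) auto
      finally have "N * L ^ Suc k < r ^ Suc k"
        using \<open>0 < L\<close> by (simp add: power_divide pos_less_divide_eq)
      then show False using power_le[of "Suc k"] by simp
    qed
  qed
  then show ?thesis using a0 by (simp add: r_def divide_le_eq)
qed

lemma arr_pow_Suc_apply:
  "(\<Sum>j<n. arr_pow n M (Suc k) i j * x j) = (\<Sum>l<n. M i l * (\<Sum>j<n. arr_pow n M k l j * x j))"
proof -
  have "(\<Sum>j<n. arr_pow n M (Suc k) i j * x j) = (\<Sum>j<n. \<Sum>l<n. M i l * arr_pow n M k l j * x j)"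
    by (simp add: sum_distrib_right mult.assoc)
  also have "\<dots> = (\<Sum>l<n. M i l * (\<Sum>j<n. arr_pow n M k l j * x j))"
    by (subst sum.swap) (simp add: sum_distrib_left mult.assoc)
  finally show ?thesis .
qed

lemma sum_sq_arr_pow_apply_log_convex:
  fixes M :: "nat \<Rightarrow> nat \<Rightarrow> real" and x :: "nat \<Rightarrow> real"
  assumes sym: "\<And>i j. i < n \<Longrightarrow> j < n \<Longrightarrow> M i j = M j i"
  defines "w \<equiv> \<lambda>k i. \<Sum>j<n. arr_pow n M k i j * x j"
  shows "(\<Sum>i<n. (w (Suc k) i)\<^sup>2)\<^sup>2 \<le> (\<Sum>i<n. (w k i)\<^sup>2) * (\<Sum>i<n. (w (Suc (Suc k)) i)\<^sup>2)"
proof -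
  have w_Suc: "w (Suc k) i = (\<Sum>l<n. M i l * w k l)" for k i
    unfolding w_def by (rule arr_pow_Suc_apply)
  have "(\<Sum>i<n. (w (Suc k) i)\<^sup>2) = (\<Sum>i<n. \<Sum>l<n. w (Suc k) i * M i l * w k l)"
    by (simp add: power2_eq_square w_Suc[of k] sum_distrib_left mult.assoc)
  also have "\<dots> = (\<Sum>l<n. \<Sum>i<n. w (Suc k) i * M i l * w k l)"
    by (rule sum.swap)
  also have "\<dots> = (\<Sum>l<n. w k l * (\<Sum>i<n. M l i * w (Suc k) i))"
    by (auto simp: sum_distrib_left sym mult_ac intro!: sum.cong)
  also have "\<dots> = (\<Sum>l<n. w k l * w (Suc (Suc k)) l)"
    by (simp add: w_Suc)
  finally show ?thesis
    by (simp only: Cauchy_Schwarz_ineq_sum)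
qed

lemma sum_sq_arr_pow_apply_le:
  fixes M :: "nat \<Rightarrow> nat \<Rightarrow> real"
  assumes sym: "\<And>i j. i < n \<Longrightarrow> j < n \<Longrightarrow> M i j = M j i"
  shows "(\<Sum>i<n. (\<Sum>j<n. arr_pow n M k i j * x j)\<^sup>2)
    \<le> (\<Sum>i<n. arr_pow n M (k + k) i i) * (\<Sum>j<n. (x j)\<^sup>2)"
proof -
  have "(\<Sum>i<n. (\<Sum>j<n. arr_pow n M k i j * x j)\<^sup>2)
      \<le> (\<Sum>i<n. (\<Sum>j<n. (arr_pow n M k i j)\<^sup>2) * (\<Sum>j<n. (x j)\<^sup>2))"
    by (intro sum_mono Cauchy_Schwarz_ineq_sum)
  also have "\<dots> = (\<Sum>i<n. arr_pow n M (k + k) i i) * (\<Sum>j<n. (x j)\<^sup>2)"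
    by (simp add: sum_distrib_right sum_sq_arr_pow_eq_diag[OF sym])
  finally show ?thesis .
qed

lemma symmetric_arr_norm_le:
  fixes M :: "nat \<Rightarrow> nat \<Rightarrow> real"
  assumes sym: "\<And>i j. i < n \<Longrightarrow> j < n \<Longrightarrow> M i j = M j i"
    and trace: "\<And>k. 0 < k \<Longrightarrow> (\<Sum>i<n. arr_pow n M (2 * k) i i) \<le> N * L ^ (2 * k)"
    and L: "0 \<le> L"
  shows "(\<Sum>i<n. (\<Sum>j<n. M i j * x j)\<^sup>2) \<le> L\<^sup>2 * (\<Sum>j<n. (x j)\<^sup>2)"
proof -
  define a where "a k = (\<Sum>i<n. (\<Sum>j<n. arr_pow n M k i j * x j)\<^sup>2)" for k
  have a0: "a 0 = (\<Sum>j<n. (x j)\<^sup>2)"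
    unfolding a_def by (intro sum.cong) (simp_all add: sum_arr_pow_0_left del: arr_pow.simps)
  have a1: "a 1 = (\<Sum>i<n. (\<Sum>j<n. M i j * x j)\<^sup>2)"
    unfolding a_def One_nat_def arr_pow_Suc_apply
    by (intro sum.cong refl arg_cong[where f = "\<lambda>t. t\<^sup>2"]) (simp add: sum_arr_pow_0_left del: arr_pow.simps)
  have "a 1 \<le> L\<^sup>2 * a 0"
  proof (rule log_convex_first_ratio_le)
    show "0 \<le> a k" for k
      by (simp add: a_def sum_nonneg)
    show "(a (Suc k))\<^sup>2 \<le> a k * a (Suc (Suc k))" for k
      unfolding a_def by (rule sum_sq_arr_pow_apply_log_convex[OF sym])
    show "a k \<le> N * (L\<^sup>2) ^ k * a 0" if "1 \<le> k" for k
    proof -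
      have "a k \<le> (\<Sum>i<n. arr_pow n M (2 * k) i i) * (\<Sum>j<n. (x j)\<^sup>2)"
        unfolding a_def mult_2 by (rule sum_sq_arr_pow_apply_le[OF sym])
      also have "\<dots> \<le> N * L ^ (2 * k) * a 0"
        using trace[of k] that unfolding a0 by (intro mult_right_mono) (auto simp: sum_nonneg)
      finally show ?thesis by (simp add: power_mult)
    qed
  qed (simp add: L)
  then show ?thesis using a0 a1 by simp
qed

lemma centered_adj_norm_le:
  assumes reg: "regular_graph n d E" and sp: "spectral_expander n E lam" and lam: "0 \<le> lam"
  shows "(\<Sum>i<n. (\<Sum>j<n. (adj E i j - real d / real n) * x j)\<^sup>2) \<le> lam\<^sup>2 * (\<Sum>j<n. (x j)\<^sup>2)"
proof -
  obtain es where es: "adj_eigenvalues n E es" and tail: "\<forall>i\<in>{1..<n}. \<bar>es ! i\<bar> \<le> lam"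
    using sp unfolding spectral_expander_def by blast
  show ?thesis
  proof (rule symmetric_arr_norm_le[OF _ _ lam])
    show "adj E i j - real d / real n = adj E j i - real d / real n" for i j
      using adj_sym[OF reg] by simp
    show "(\<Sum>i<n. arr_pow n (\<lambda>i j. adj E i j - real d / real n) (2 * k) i i) \<le> real n * lam ^ (2 * k)"
      if "0 < k" for k
      using that by (intro trace_centered_adj_pow_le[OF reg es tail]) auto
  qed
qed

lemma abs_sum_mult_le:
  fixes f g :: "'a \<Rightarrow> real"
  shows "\<bar>\<Sum>i\<in>I. f i * g i\<bar> \<le> sqrt (\<Sum>i\<in>I. (f i)\<^sup>2) * sqrt (\<Sum>i\<in>I. (g i)\<^sup>2)"
proof -
  have "\<bar>\<Sum>i\<in>I. f i * g i\<bar> = sqrt ((\<Sum>i\<in>I. f i * g i)\<^sup>2)" by simp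
  also have "\<dots> \<le> sqrt ((\<Sum>i\<in>I. (f i)\<^sup>2) * (\<Sum>i\<in>I. (g i)\<^sup>2))"
    by (rule real_sqrt_le_mono[OF Cauchy_Schwarz_ineq_sum])
  finally show ?thesis by (simp add: real_sqrt_mult)
qed

section \<open>The expander mixing lemma\<close>

theorem expander_mixing:
  assumes reg: "regular_graph n d E" and sp: "spectral_expander n E lam" and lam: "0 \<le> lam"
  shows "\<bar>\<Sum>i<n. \<Sum>j<n. x i * y j * (adj E i j - real d / real n)\<bar>
    \<le> lam * sqrt (\<Sum>i<n. (x i)\<^sup>2) * sqrt (\<Sum>j<n. (y j)\<^sup>2)"
proof -
  define z where "z i = (\<Sum>j<n. (adj E i j - real d / real n) * y j)" for i
  have "(\<Sum>i<n. \<Sum>j<n. x i * y j * (adj E i j - real d / real n)) = (\<Sum>i<n. x i * z i)"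
    by (simp add: z_def sum_distrib_left ac_simps)
  also have "\<bar>\<dots>\<bar> \<le> sqrt (\<Sum>i<n. (x i)\<^sup>2) * sqrt (\<Sum>i<n. (z i)\<^sup>2)"
    by (rule abs_sum_mult_le)
  also have "\<dots> \<le> sqrt (\<Sum>i<n. (x i)\<^sup>2) * (lam * sqrt (\<Sum>j<n. (y j)\<^sup>2))"
  proof (rule mult_left_mono)
    have "sqrt (\<Sum>i<n. (z i)\<^sup>2) \<le> sqrt (lam\<^sup>2 * (\<Sum>j<n. (y j)\<^sup>2))"
      unfolding z_def by (rule real_sqrt_le_mono[OF centered_adj_norm_le[OF reg sp lam]])
    then show "sqrt (\<Sum>i<n. (z i)\<^sup>2) \<le> lam * sqrt (\<Sum>j<n. (y j)\<^sup>2)"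
      using lam by (simp add: real_sqrt_mult)
  qed (simp add: sum_nonneg)
  finally show ?thesis by (simp add: ac_simps)
qed

corollary expander_mixing_upper:
  assumes "regular_graph n d E" "spectral_expander n E lam" "0 \<le> lam"
  shows "(\<Sum>i<n. \<Sum>j<n. x i * adj E i j * y j)
    \<le> real d / real n * (\<Sum>i<n. x i) * (\<Sum>j<n. y j) + lam * sqrt (\<Sum>i<n. (x i)\<^sup>2) * sqrt (\<Sum>j<n. (y j)\<^sup>2)"
proof -
  have "(\<Sum>i<n. \<Sum>j<n. x i * y j * (adj E i j - real d / real n))
      = (\<Sum>i<n. \<Sum>j<n. x i * adj E i j * y j) - real d / real n * (\<Sum>i<n. x i) * (\<Sum>j<n. y j)"
    by (simp add: algebra_simps sum_subtractf sum_distrib_left sum_distrib_right sum_divide_distrib)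
  then show ?thesis using expander_mixing[OF assms, of x y] by linarith
qed

lemma expander_param_lower_bound:
  assumes reg: "regular_graph n d E" and sp: "spectral_expander n E lam" and lam: "0 \<le> lam"
    and "0 < d" "0 < n"
  shows "1 - real d / real n \<le> lam"
proof -
  have "card {u. (0, u) \<in> E} = d"
    using reg \<open>0 < n\<close> unfolding regular_graph_def by auto
  then obtain v where edge: "(0, v) \<in> E"
    using \<open>0 < d\<close> by fastforce
  then have v: "v < n"
    using regular_graph_edges_subset[OF reg] by auto
  define x where "x i = (if i = 0 then 1 else 0 :: real)" for i :: nat
  define y where "y j = (if j = v then 1 else 0 :: real)" for j :: nat
  have "(\<Sum>j<n. x i * y j * (adj E i j - real d / real n))
      = (\<Sum>j<n. if j = v then x i * (adj E i v - real d / real n) else 0)" for i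
    by (rule sum.cong) (simp_all add: y_def)
  then have "(\<Sum>i<n. \<Sum>j<n. x i * y j * (adj E i j - real d / real n))
      = (\<Sum>i<n. if i = 0 then adj E 0 v - real d / real n else 0)"
    using v by (intro sum.cong) (simp_all add: x_def)
  also have "\<dots> = 1 - real d / real n"
    using \<open>0 < n\<close> edge by (simp add: adj_def)
  moreover have "(\<Sum>i<n. (x i)\<^sup>2) = 1" "(\<Sum>j<n. (y j)\<^sup>2) = 1"
  proof -
    have sq: "(x i)\<^sup>2 = x i" "(y i)\<^sup>2 = y i" for i
      by (simp_all add: x_def y_def)
    have "(\<Sum>i<n. x i) = 1" "(\<Sum>j<n. y j) = 1"
      using \<open>0 < n\<close> v by (simp_all add: x_def y_def)
    then show "(\<Sum>i<n. (x i)\<^sup>2) = 1" "(\<Sum>j<n. (y j)\<^sup>2) = 1"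
      by (simp_all add: sq)
  qed
  ultimately show ?thesis
    using expander_mixing[OF reg sp lam, of x y] by simp
qed

section \<open>Fibres of tampering functions and the edge bias\<close>

definition fiber_card :: "nat \<Rightarrow> (nat \<Rightarrow> nat) \<Rightarrow> nat \<Rightarrow> real" where
  "fiber_card n g a = real (card {u. u < n \<and> g u = a})"

lemma fiber_card_nonneg [simp]: "0 \<le> fiber_card n g a"
  by (simp add: fiber_card_def)

lemma sqrt_of_nat_le: "sqrt (real k) \<le> real k"
proof (cases "k = 0")
  case False
  then have "sqrt (real k) \<le> sqrt (real k * real k)"
    by (intro real_sqrt_le_mono) simp
  then show ?thesis by simp
qed simp

lemma sum_over_fibers:
  fixes g :: "nat \<Rightarrow> nat" and F :: "nat \<Rightarrow> nat \<Rightarrow> 'a::comm_monoid_add"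
  assumes maps: "\<And>u. u < n \<Longrightarrow> g u < n"
  shows "(\<Sum>u<n. F u (g u)) = (\<Sum>a<n. \<Sum>u | u < n \<and> g u = a. F u a)"
proof -
  have "(\<Sum>a<n. \<Sum>u | u < n \<and> g u = a. F u a) = (\<Sum>a<n. \<Sum>u\<in>{x \<in> {..<n}. g x = a}. F u (g u))"
    by (intro sum.cong) auto
  also have "\<dots> = (\<Sum>u<n. F u (g u))"
    using maps by (intro sum.group) auto
  finally show ?thesis ..
qed

lemma sum_comp_eq_sum_fiber_card:
  assumes "\<And>u. u < n \<Longrightarrow> g u < n"
  shows "(\<Sum>u<n. \<phi> (g u)) = (\<Sum>a<n. fiber_card n g a * \<phi> a)"
  using sum_over_fibers[OF assms, where F = "\<lambda>u a. \<phi> a"] by (simp add: fiber_card_def)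

lemma sum_fiber_card: "(\<And>u. u < n \<Longrightarrow> g u < n) \<Longrightarrow> (\<Sum>a<n. fiber_card n g a) = real n"
  using sum_comp_eq_sum_fiber_card[of n g "\<lambda>_. 1"] by simp

lemma sum_sum_comp_eq_sum_fiber_card:
  assumes g: "\<And>u. u < n \<Longrightarrow> g u < n" and h: "\<And>v. v < n \<Longrightarrow> h v < n"
  shows "(\<Sum>u<n. \<Sum>v<n. \<psi> (g u) (h v)) = (\<Sum>a<n. \<Sum>b<n. fiber_card n g a * \<psi> a b * fiber_card n h b)"
proof -
  have "(\<Sum>u<n. \<Sum>v<n. \<psi> (g u) (h v)) = (\<Sum>u<n. \<Sum>b<n. fiber_card n h b * \<psi> (g u) b)"
    by (rule sum.cong[OF refl], rule sum_comp_eq_sum_fiber_card[OF h])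
  also have "\<dots> = (\<Sum>a<n. fiber_card n g a * (\<Sum>b<n. fiber_card n h b * \<psi> a b))"
    by (rule sum_comp_eq_sum_fiber_card[OF g])
  finally show ?thesis by (simp add: sum_distrib_left ac_simps)
qed

definition edge_bias :: "nat \<Rightarrow> nat \<Rightarrow> (nat \<times> nat) set \<Rightarrow> (nat \<Rightarrow> nat) \<Rightarrow> (nat \<Rightarrow> nat) \<Rightarrow> real" where
  "edge_bias n d E g h = (\<Sum>u<n. \<Sum>v<n. adj E (g u) (h v) * (real d / real n - adj E u v))"

lemma light_fibers_bound:
  assumes maps: "\<And>u. u < n \<Longrightarrow> g u < n" and "0 \<le> T"
  defines "x \<equiv> \<lambda>a. if fiber_card n g a \<le> T then fiber_card n g a else 0"
  shows "0 \<le> (\<Sum>a<n. x a)" "(\<Sum>a<n. x a) \<le> real n" "sqrt (\<Sum>a<n. (x a)\<^sup>2) \<le> sqrt (T * real n)"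
proof -
  show "0 \<le> (\<Sum>a<n. x a)"
    by (simp add: x_def sum_nonneg)
  have "(\<Sum>a<n. x a) \<le> (\<Sum>a<n. fiber_card n g a)"
    by (intro sum_mono) (simp add: x_def)
  then show "(\<Sum>a<n. x a) \<le> real n"
    using sum_fiber_card[OF maps] by simp
  have "(\<Sum>a<n. (x a)\<^sup>2) \<le> (\<Sum>a<n. T * fiber_card n g a)"
    by (intro sum_mono) (simp add: x_def power2_eq_square mult_right_mono \<open>0 \<le> T\<close>)
  then show "sqrt (\<Sum>a<n. (x a)\<^sup>2) \<le> sqrt (T * real n)"
    using sum_fiber_card[OF maps] by (simp flip: sum_distrib_left)
qed

lemma edge_bias_light_le:
  assumes reg: "regular_graph n d E" and sp: "spectral_expander n E lam" and lam: "0 \<le> lam"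
    and g: "\<And>u. u < n \<Longrightarrow> g u < n" and h: "\<And>v. v < n \<Longrightarrow> h v < n" and T: "0 \<le> T"
  shows "(\<Sum>u<n. \<Sum>v<n. if fiber_card n g (g u) \<le> T \<and> fiber_card n h (h v) \<le> T
      then adj E (g u) (h v) * (real d / real n - adj E u v) else 0) \<le> real d ^ 2 + real d * lam * T"
proof -
  define c where "c = real d / real n"
  define x where "x a = (if fiber_card n g a \<le> T then fiber_card n g a else 0)" for a
  define y where "y b = (if fiber_card n h b \<le> T then fiber_card n h b else 0)" for b
  have "(\<Sum>u<n. \<Sum>v<n. if fiber_card n g (g u) \<le> T \<and> fiber_card n h (h v) \<le> T
      then adj E (g u) (h v) * (c - adj E u v) else 0)
    \<le> c * (\<Sum>u<n. \<Sum>v<n. if fiber_card n g (g u) \<le> T \<and> fiber_card n h (h v) \<le> T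
      then adj E (g u) (h v) else 0)"
    unfolding sum_distrib_left c_def by (intro sum_mono) (simp add: algebra_simps)
  also have "\<dots> = c * (\<Sum>a<n. \<Sum>b<n. fiber_card n g a
      * (if fiber_card n g a \<le> T \<and> fiber_card n h b \<le> T then adj E a b else 0) * fiber_card n h b)"
    by (simp only: sum_sum_comp_eq_sum_fiber_card[OF g h,
          where \<psi> = "\<lambda>a b. if fiber_card n g a \<le> T \<and> fiber_card n h b \<le> T then adj E a b else 0"])
  also have "\<dots> = c * (\<Sum>a<n. \<Sum>b<n. x a * adj E a b * y b)"
    unfolding x_def y_def by (intro arg_cong[where f = "(*) c"] sum.cong) auto
  also have "\<dots> \<le> c * (c * real n * real n + lam * (T * real n))"
  proof (rule mult_left_mono)
    have "(\<Sum>a<n. \<Sum>b<n. x a * adj E a b * y b)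
        \<le> c * (\<Sum>a<n. x a) * (\<Sum>b<n. y b) + lam * sqrt (\<Sum>a<n. (x a)\<^sup>2) * sqrt (\<Sum>b<n. (y b)\<^sup>2)"
      unfolding c_def by (rule expander_mixing_upper[OF reg sp lam])
    also have "\<dots> \<le> c * real n * real n + lam * sqrt (T * real n) * sqrt (T * real n)"
      using light_fibers_bound[of n g T, OF g T] light_fibers_bound[of n h T, OF h T] lam T
      unfolding x_def[symmetric] y_def[symmetric] c_def
      by (intro add_mono mult_mono) (auto simp: sum_nonneg)
    finally show "(\<Sum>a<n. \<Sum>b<n. x a * adj E a b * y b) \<le> c * real n * real n + lam * (T * real n)"
      using T by (simp add: mult.assoc)
  qed (simp add: c_def)
  also have "\<dots> \<le> real d ^ 2 + real d * lam * T"
  proof (cases "n = 0")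
    case True
    then show ?thesis using lam T by (simp add: c_def)
  next
    case False
    then show ?thesis by (simp add: c_def power2_eq_square field_simps)
  qed
  finally show ?thesis
    unfolding c_def .
qed

lemma heavy_fiber_weights_bound:
  fixes n :: nat and g h :: "nat \<Rightarrow> nat" and T :: real
  assumes g: "\<And>u. u < n \<Longrightarrow> g u < n" and h: "\<And>v. v < n \<Longrightarrow> h v < n" and T: "0 < T"
  defines "X \<equiv> \<lambda>a. if T < fiber_card n g a then sqrt (fiber_card n g a) else 0"
    and "Z \<equiv> \<lambda>b. sqrt (fiber_card n h b)"
  shows "(\<Sum>a<n. X a) * (\<Sum>b<n. Z b) \<le> real n / sqrt T * real n"
    and "sqrt (\<Sum>a<n. (X a)\<^sup>2) * sqrt (\<Sum>b<n. (Z b)\<^sup>2) \<le> real n"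
proof -
  have "X a \<le> fiber_card n g a / sqrt T" for a
  proof (cases "T < fiber_card n g a")
    case True
    then have "sqrt (fiber_card n g a) * sqrt T \<le> sqrt (fiber_card n g a) * sqrt (fiber_card n g a)"
      by (intro mult_left_mono) auto
    then show ?thesis using True T by (simp add: X_def pos_le_divide_eq)
  qed (use T in \<open>simp add: X_def\<close>)
  then have "(\<Sum>a<n. X a) \<le> (\<Sum>a<n. fiber_card n g a / sqrt T)"
    by (rule sum_mono)
  also have "\<dots> = real n / sqrt T"
    by (simp add: sum_fiber_card[of n g, OF g] flip: sum_divide_distrib)
  finally have sum_X: "(\<Sum>a<n. X a) \<le> real n / sqrt T" .
  have "(\<Sum>b<n. Z b) \<le> (\<Sum>b<n. fiber_card n h b)"
    unfolding Z_def fiber_card_def by (intro sum_mono sqrt_of_nat_le)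
  then have sum_Z: "(\<Sum>b<n. Z b) \<le> real n"
    by (simp add: sum_fiber_card[of n h, OF h])
  show "(\<Sum>a<n. X a) * (\<Sum>b<n. Z b) \<le> real n / sqrt T * real n"
    using sum_X sum_Z T by (intro mult_mono) (auto simp: X_def Z_def intro: sum_nonneg)
  have "(\<Sum>a<n. (X a)\<^sup>2) \<le> (\<Sum>a<n. fiber_card n g a)"
    by (intro sum_mono) (simp add: X_def)
  then have "(\<Sum>a<n. (X a)\<^sup>2) \<le> real n"
    by (simp add: sum_fiber_card[of n g, OF g])
  moreover have "(\<Sum>b<n. (Z b)\<^sup>2) = real n"
    by (simp add: Z_def sum_fiber_card[of n h, OF h])
  ultimately have "sqrt (\<Sum>a<n. (X a)\<^sup>2) * sqrt (\<Sum>b<n. (Z b)\<^sup>2) \<le> sqrt (real n) * sqrt (real n)"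
    by (intro mult_mono real_sqrt_le_mono) auto
  then show "sqrt (\<Sum>a<n. (X a)\<^sup>2) * sqrt (\<Sum>b<n. (Z b)\<^sup>2) \<le> real n"
    by simp
qed

text \<open>Charging each heavy pair \<open>(a, b)\<close> to \<open>sqrt (fiber_card n g a) * sqrt (fiber_card n h b)\<close>
  makes the expander mixing lemma applicable.\<close>

lemma heavy_fibers_degree_le:
  assumes reg: "regular_graph n d E" and sp: "spectral_expander n E lam" and lam: "0 \<le> lam"
    and g: "\<And>u. u < n \<Longrightarrow> g u < n" and h: "\<And>v. v < n \<Longrightarrow> h v < n" and T: "0 < T"
    and heavy: "\<And>a b. \<Phi> a b \<Longrightarrow> T < fiber_card n g a \<and> fiber_card n h b \<le> fiber_card n g a"
  shows "(\<Sum>a<n. \<Sum>v<n. if \<Phi> a (h v) then adj E a (h v) else 0) \<le> real d * real n / sqrt T + lam * real n"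
proof -
  define X where "X a = (if T < fiber_card n g a then sqrt (fiber_card n g a) else 0)" for a
  define Z where "Z b = sqrt (fiber_card n h b)" for b
  have "(\<Sum>a<n. \<Sum>v<n. if \<Phi> a (h v) then adj E a (h v) else 0)
      = (\<Sum>a<n. \<Sum>b<n. fiber_card n h b * (if \<Phi> a b then adj E a b else 0))"
    by (rule sum.cong[OF refl], rule sum_comp_eq_sum_fiber_card[OF h])
  also have "\<dots> \<le> (\<Sum>a<n. \<Sum>b<n. X a * adj E a b * Z b)"
  proof (intro sum_mono)
    fix a b
    show "fiber_card n h b * (if \<Phi> a b then adj E a b else 0) \<le> X a * adj E a b * Z b"
    proof (cases "\<Phi> a b")
      case True
      then have "T < fiber_card n g a" and hg: "fiber_card n h b \<le> fiber_card n g a"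
        using heavy by auto
      have "fiber_card n h b = sqrt (fiber_card n h b) * sqrt (fiber_card n h b)"
        by simp
      also have "\<dots> \<le> sqrt (fiber_card n g a) * sqrt (fiber_card n h b)"
        using hg by (intro mult_right_mono) auto
      finally have "adj E a b * fiber_card n h b \<le> adj E a b * (sqrt (fiber_card n g a) * sqrt (fiber_card n h b))"
        by (rule mult_left_mono) simp
      then show ?thesis
        using True \<open>T < fiber_card n g a\<close> by (simp add: X_def Z_def ac_simps)
    qed (simp add: X_def Z_def)
  qed
  also have "\<dots> \<le> real d / real n * ((\<Sum>a<n. X a) * (\<Sum>b<n. Z b))
      + lam * (sqrt (\<Sum>a<n. (X a)\<^sup>2) * sqrt (\<Sum>b<n. (Z b)\<^sup>2))"
    using expander_mixing_upper[OF reg sp lam, of X Z] by (simp only: mult.assoc)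
  also have "\<dots> \<le> real d / real n * (real n / sqrt T * real n) + lam * real n"
    using heavy_fiber_weights_bound[OF g h T] lam unfolding X_def Z_def
    by (intro add_mono mult_left_mono) auto
  also have "\<dots> \<le> real d * real n / sqrt T + lam * real n"
    by (cases "n = 0") simp_all
  finally show ?thesis .
qed

lemma fiber_mixing_le:
  assumes reg: "regular_graph n d E" and sp: "spectral_expander n E lam" and lam: "0 \<le> lam"
  shows "(\<Sum>u | u < n \<and> g u = a. \<Sum>v<n. if \<Psi> v then adj E a (h v) * (real d / real n - adj E u v) else 0)
    \<le> lam * sqrt (fiber_card n g a) * sqrt (\<Sum>v<n. if \<Psi> v then adj E a (h v) else 0)"
proof -
  define c where "c = real d / real n"
  define x where "x u = (if g u = a then 1 else 0 :: real)" for u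
  define y where "y v = (if \<Psi> v then adj E a (h v) else 0)" for v
  define F where "F u = (\<Sum>v<n. if \<Psi> v then adj E a (h v) * (c - adj E u v) else 0)" for u
  have "(\<Sum>u | u < n \<and> g u = a. F u) = (\<Sum>u<n. if g u = a then F u else 0)"
    using sum.inter_filter[of "{..<n}" F "\<lambda>u. g u = a"] by simp
  also have "\<dots> = (\<Sum>u<n. - (\<Sum>v<n. x u * y v * (adj E u v - c)))"
    by (intro sum.cong) (auto simp: F_def x_def y_def algebra_simps sum_negf[symmetric] intro!: sum.cong)
  also have "\<dots> \<le> lam * sqrt (\<Sum>u<n. (x u)\<^sup>2) * sqrt (\<Sum>v<n. (y v)\<^sup>2)"
    using expander_mixing[OF reg sp lam, of x y] unfolding c_def sum_negf by linarith
  also have "(\<Sum>u<n. (x u)\<^sup>2) = (\<Sum>u<n. of_bool (g u = a))"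
    by (intro sum.cong) (simp_all add: x_def)
  also have "\<dots> = fiber_card n g a"
    by (simp add: fiber_card_def Int_def)
  also have "(\<Sum>v<n. (y v)\<^sup>2) = (\<Sum>v<n. if \<Psi> v then adj E a (h v) else 0)"
    by (intro sum.cong) (simp_all add: y_def)
  finally show ?thesis
    unfolding F_def c_def .
qed

lemma edge_bias_heavy_le:
  assumes reg: "regular_graph n d E" and sp: "spectral_expander n E lam" and lam: "0 \<le> lam"
    and g: "\<And>u. u < n \<Longrightarrow> g u < n" and h: "\<And>v. v < n \<Longrightarrow> h v < n" and T: "0 < T"
    and heavy: "\<And>a b. \<Phi> a b \<Longrightarrow> T < fiber_card n g a \<and> fiber_card n h b \<le> fiber_card n g a"
  shows "(\<Sum>u<n. \<Sum>v<n. if \<Phi> (g u) (h v) then adj E (g u) (h v) * (real d / real n - adj E u v) else 0)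
    \<le> lam * sqrt (real n) * sqrt (real d * real n / sqrt T + lam * real n)"
proof -
  define Y where "Y a = (\<Sum>v<n. if \<Phi> a (h v) then adj E a (h v) else 0)" for a
  have "(\<Sum>u<n. \<Sum>v<n. if \<Phi> (g u) (h v) then adj E (g u) (h v) * (real d / real n - adj E u v) else 0)
      = (\<Sum>a<n. \<Sum>u | u < n \<and> g u = a.
          \<Sum>v<n. if \<Phi> a (h v) then adj E a (h v) * (real d / real n - adj E u v) else 0)"
    by (rule sum_over_fibers[OF g])
  also have "\<dots> \<le> (\<Sum>a<n. lam * sqrt (fiber_card n g a) * sqrt (Y a))"
    unfolding Y_def by (intro sum_mono fiber_mixing_le[OF reg sp lam])
  also have "\<dots> = lam * (\<Sum>a<n. sqrt (fiber_card n g a) * sqrt (Y a))"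
    by (simp add: sum_distrib_left mult.assoc)
  also have "\<dots> \<le> lam * (sqrt (real n) * sqrt (\<Sum>a<n. Y a))"
  proof (rule mult_left_mono)
    have "(\<Sum>a<n. sqrt (fiber_card n g a) * sqrt (Y a))
        \<le> sqrt (\<Sum>a<n. (sqrt (fiber_card n g a))\<^sup>2) * sqrt (\<Sum>a<n. (sqrt (Y a))\<^sup>2)"
      using abs_sum_mult_le[of "\<lambda>a. sqrt (fiber_card n g a)" "\<lambda>a. sqrt (Y a)" "{..<n}"] by linarith
    also have "\<dots> = sqrt (real n) * sqrt (\<Sum>a<n. Y a)"
      by (simp add: Y_def sum_nonneg sum_fiber_card[of n g, OF g])
    finally show "(\<Sum>a<n. sqrt (fiber_card n g a) * sqrt (Y a)) \<le> sqrt (real n) * sqrt (\<Sum>a<n. Y a)" .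
  qed (rule lam)
  also have "\<dots> \<le> lam * (sqrt (real n) * sqrt (real d * real n / sqrt T + lam * real n))"
    using heavy_fibers_degree_le[OF reg sp lam g h T heavy] lam unfolding Y_def
    by (intro mult_left_mono real_sqrt_le_mono) auto
  finally show ?thesis
    by (simp add: mult.assoc)
qed

lemma edge_bias_le:
  assumes reg: "regular_graph n d E" and sp: "spectral_expander n E lam" and lam: "0 < lam"
    and g: "\<And>u. u < n \<Longrightarrow> g u < n" and h: "\<And>v. v < n \<Longrightarrow> h v < n" and d: "0 < d"
  shows "edge_bias n d E g h \<le> real d ^ 2 + real d ^ 3 / lam + 2 * lam * real n * sqrt (2 * lam)"
proof -
  \<comment> \<open>balances the light-pair bound \<open>d * lam * T\<close> against the heavy-pair bound \<open>d * n / sqrt T\<close>\<close>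
  define T where "T = (real d / lam)\<^sup>2"
  have T: "0 < T"
    unfolding T_def using d lam by (intro zero_less_power) simp
  have sqrt_T: "sqrt T = real d / lam"
    unfolding T_def using lam by (intro real_sqrt_unique) auto
  define light where "light a b \<longleftrightarrow> fiber_card n g a \<le> T \<and> fiber_card n h b \<le> T" for a b
  define heavy_left where "heavy_left a b \<longleftrightarrow> \<not> light a b \<and> fiber_card n h b \<le> fiber_card n g a" for a b
  define heavy_right where "heavy_right a b \<longleftrightarrow> \<not> light a b \<and> fiber_card n g a < fiber_card n h b" for a b
  define part where "part P = (\<Sum>u<n. \<Sum>v<n. if P (g u) (h v)
    then adj E (g u) (h v) * (real d / real n - adj E u v) else 0)" for P
  have split: "edge_bias n d E g h = part light + part heavy_left + part heavy_right"
    unfolding edge_bias_def part_def sum.distrib[symmetric]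
    by (intro sum.cong refl) (auto simp: heavy_left_def heavy_right_def)
  have heavy_bound: "lam * sqrt (real n) * sqrt (real d * real n / sqrt T + lam * real n)
      = lam * real n * sqrt (2 * lam)"
    using lam d by (simp add: sqrt_T real_sqrt_mult field_simps)
  have "part light \<le> real d ^ 2 + real d * lam * T"
    unfolding part_def light_def by (rule edge_bias_light_le[OF reg sp _ g h]) (use lam T in auto)
  also have "real d * lam * T = real d ^ 3 / lam"
    using lam by (simp add: T_def power2_eq_square power3_eq_cube field_simps)
  finally have light: "part light \<le> real d ^ 2 + real d ^ 3 / lam" .
  have "part heavy_left \<le> lam * real n * sqrt (2 * lam)"
    unfolding part_def heavy_bound[symmetric]
    by (rule edge_bias_heavy_le[OF reg sp _ g h T]) (use lam in \<open>auto simp: heavy_left_def light_def\<close>)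
  moreover have "part heavy_right \<le> lam * real n * sqrt (2 * lam)"
  proof -
    have swap: "adj E (g u) (h v) * (real d / real n - adj E u v)
        = adj E (h v) (g u) * (real d / real n - adj E v u)" for u v
      by (subst adj_sym[OF reg, of "g u"], subst adj_sym[OF reg, of u]) (rule refl)
    have "part heavy_right = (\<Sum>v<n. \<Sum>u<n. if heavy_right (g u) (h v)
        then adj E (h v) (g u) * (real d / real n - adj E v u) else 0)"
      unfolding part_def swap by (rule sum.swap)
    also have "\<dots> \<le> lam * sqrt (real n) * sqrt (real d * real n / sqrt T + lam * real n)"
      by (rule edge_bias_heavy_le[OF reg sp _ h g T, where \<Phi> = "\<lambda>b a. heavy_right a b"])
        (use lam in \<open>auto simp: heavy_right_def light_def\<close>)
    finally show ?thesis unfolding heavy_bound .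
  qed
  ultimately show ?thesis
    using split light by simp
qed

section \<open>Non-malleability of the graph code\<close>

lemma stat_dist_le:
  assumes "\<And>A. \<bar>measure_pmf.prob p A - measure_pmf.prob q A\<bar> \<le> \<delta>"
  shows "stat_dist p q \<le> \<delta>"
  unfolding stat_dist_def by (rule cSUP_least) (auto intro: assms)

lemma stat_dist_le_1: "stat_dist p q \<le> 1"
proof (rule stat_dist_le)
  fix A
  have "measure_pmf.prob p A \<le> 1" "measure_pmf.prob q A \<le> 1"
    "0 \<le> measure_pmf.prob p A" "0 \<le> measure_pmf.prob q A"
    by simp_all
  then show "\<bar>measure_pmf.prob p A - measure_pmf.prob q A\<bar> \<le> 1"
    unfolding abs_le_iff by linarith
qed

lemma measure_map_Some_bernoulli:
  assumes "0 \<le> q" "q \<le> 1"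
  shows "measure_pmf.prob (map_pmf Some (bernoulli_pmf q)) A
    = (if Some True \<in> A then q else 0) + (if Some False \<in> A then 1 - q else 0)"
proof -
  have "measure_pmf.prob (map_pmf Some (bernoulli_pmf q)) A
      = (\<Sum>b\<in>UNIV. if Some b \<in> A then pmf (bernoulli_pmf q) b else 0)"
    by (simp add: measure_map_pmf measure_measure_pmf_finite sum.If_cases vimage_def Int_def)
  then show ?thesis
    using assms by (simp add: UNIV_bool)
qed

lemma map_pmf_of_set_mem_eq_bernoulli:
  assumes "finite S" "S \<noteq> {}"
  shows "map_pmf (\<lambda>x. x \<in> F) (pmf_of_set S) = bernoulli_pmf (real (card (S \<inter> F)) / real (card S))"
proof -
  have card_S: "0 < card S" and card_le: "card (S \<inter> F) \<le> card S"
    using assms by (auto simp: card_gt_0_iff intro: card_mono)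
  have card_diff: "card (S - F) = card S - card (S \<inter> F)"
    using assms(1) by (simp add: card_Diff_subset_Int)
  show ?thesis
  proof (rule pmf_eqI)
    fix b
    have "pmf (map_pmf (\<lambda>x. x \<in> F) (pmf_of_set S)) b
        = real (card (S \<inter> {x. (x \<in> F) = b})) / real (card S)"
      using assms by (simp add: pmf_map measure_pmf_of_set vimage_def)
    then show "pmf (map_pmf (\<lambda>x. x \<in> F) (pmf_of_set S)) b
        = pmf (bernoulli_pmf (real (card (S \<inter> F)) / real (card S))) b"
      using card_S card_le card_diff
      by (cases b) (simp_all add: Diff_eq Int_def of_nat_diff field_simps)
  qed
qed


lemma bit_tampering_simulation:
  fixes p :: "bool \<Rightarrow> real"
  assumes p: "\<And>s. 0 \<le> p s" "\<And>s. p s \<le> 1"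
  shows "\<exists>D. \<forall>s. stat_dist (map_pmf Some (bernoulli_pmf (p s))) (map_pmf (nm_sim s) D)
    \<le> max 0 (p False - p True)"
proof -
  define m where "m = min (p False) (p True)"
  define D where "D = pmf_of_list [(Msg True, m), (Same, p True - m), (Msg False, 1 - p True)]"
  have "pmf_of_list_wf [(Msg True, m), (Same, p True - m), (Msg False, 1 - p True)]"
    using p by (auto simp: pmf_of_list_wf_def m_def)
  then have D: "measure_pmf.prob (map_pmf (nm_sim s) D) A =
      (if nm_sim s (Msg True) \<in> A then m else 0) + (if nm_sim s Same \<in> A then p True - m else 0)
      + (if nm_sim s (Msg False) \<in> A then 1 - p True else 0)" for s A
    unfolding D_def measure_map_pmf by (simp add: measure_pmf_of_list)
  have "stat_dist (map_pmf Some (bernoulli_pmf (p s))) (map_pmf (nm_sim s) D) \<le> max 0 (p False - p True)"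
    for s
    unfolding stat_dist_def D measure_map_Some_bernoulli[OF p]
    by (cases s) (auto intro!: cSUP_least simp: nm_sim_def m_def min_def)
  then show ?thesis by blast
qed

lemma tampered_edge_prob_gap:
  assumes reg: "regular_graph n d E" and "0 < d" "d < n"
    and g: "\<And>u. u < n \<Longrightarrow> g u < n" and h: "\<And>v. v < n \<Longrightarrow> h v < n"
  defines "F \<equiv> {x. (g (fst x), h (snd x)) \<in> E}" and "S0 \<equiv> {0..<n} \<times> {0..<n} - E"
  shows "real (card (S0 \<inter> F)) / real (card S0) - real (card (E \<inter> F)) / real (card E)
    = edge_bias n d E g h / (real d * (real n - real d))"
proof -
  have E: "E \<subseteq> {..<n} \<times> {..<n}" by (rule regular_graph_edges_subset[OF reg])
  have S0: "S0 \<subseteq> {..<n} \<times> {..<n}" by (auto simp: S0_def)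
  define P where "P = (\<Sum>u<n. \<Sum>v<n. adj E u v * adj E (g u) (h v))"
  define Q where "Q = (\<Sum>u<n. \<Sum>v<n. adj E (g u) (h v))"
  have "real (card (E \<inter> F)) = (\<Sum>u<n. \<Sum>v<n. of_bool ((u, v) \<in> E \<inter> F))"
    using E by (intro card_eq_sum_indicator) auto
  also have "\<dots> = P"
    unfolding P_def by (intro sum.cong refl) (simp add: F_def adj_def of_bool_conj)
  finally have card_EF: "real (card (E \<inter> F)) = P" .
  have "real (card (S0 \<inter> F)) = (\<Sum>u<n. \<Sum>v<n. of_bool ((u, v) \<in> S0 \<inter> F))"
    using S0 by (intro card_eq_sum_indicator) auto
  also have "\<dots> = (\<Sum>u<n. \<Sum>v<n. adj E (g u) (h v) - adj E u v * adj E (g u) (h v))"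
    by (intro sum.cong refl) (simp add: S0_def F_def adj_def)
  finally have card_S0F: "real (card (S0 \<inter> F)) = Q - P"
    by (simp add: P_def Q_def sum_subtractf)
  have card_S0: "real (card S0) = real n * (real n - real d)"
  proof -
    have "real (card S0) = (\<Sum>u<n. \<Sum>v<n. of_bool ((u, v) \<in> S0))"
      using S0 by (intro card_eq_sum_indicator) auto
    also have "\<dots> = (\<Sum>u<n. \<Sum>v<n. 1 - adj E u v)"
      by (intro sum.cong refl) (simp add: S0_def adj_def)
    also have "\<dots> = real n * (real n - real d)"
      using adj_row_sum[OF reg] by (simp add: sum_subtractf algebra_simps)
    finally show ?thesis .
  qed
  have bias: "edge_bias n d E g h = real d / real n * Q - P"
    by (simp add: edge_bias_def P_def Q_def algebra_simps sum_subtractf sum_distrib_left)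
  have "0 < real d" "0 < real n - real d" "0 < real n"
    using \<open>0 < d\<close> \<open>d < n\<close> by simp_all
  then show ?thesis
    unfolding card_EF card_S0F card_S0 card_edges[OF reg] bias by (simp add: field_simps)
qed

definition graph_code_support :: "nat \<Rightarrow> (nat \<times> nat) set \<Rightarrow> bool \<Rightarrow> (nat \<times> nat) set" where
  "graph_code_support n E s = (if s then E else {0..<n} \<times> {0..<n} - E)"

lemma graph_enc_eq: "graph_enc n E s = pmf_of_set (graph_code_support n E s)"
  by (simp add: graph_enc_def graph_code_support_def)

lemma graph_code_support:
  assumes reg: "regular_graph n d E" and "0 < d" "d < n"
  shows "graph_code_support n E s \<subseteq> {0..<n} \<times> {0..<n}"
    and "finite (graph_code_support n E s)"
    and "graph_code_support n E s \<noteq> {}"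
proof -
  show sub: "graph_code_support n E s \<subseteq> {0..<n} \<times> {0..<n}"
    using regular_graph_edges_subset[OF reg] by (auto simp: graph_code_support_def)
  then show "finite (graph_code_support n E s)"
    by (rule finite_subset) simp
  have "E \<noteq> {}"
    using card_edges[OF reg] assms(2,3) by auto
  moreover have "(0, 0) \<in> {0..<n} \<times> {0..<n} - E"
    using reg assms(3) unfolding regular_graph_def undirected_graph_def irrefl_def by auto
  ultimately show "graph_code_support n E s \<noteq> {}"
    unfolding graph_code_support_def by (cases s) (simp only: if_True if_False, blast)+
qed

lemma graph_code_tampering:
  assumes reg: "regular_graph n d E" and d: "0 < d" "d < n"
    and g: "\<And>u. u < n \<Longrightarrow> g u < n" and h: "\<And>v. v < n \<Longrightarrow> h v < n"
  shows "\<exists>D. \<forall>s. stat_dist (map_pmf (\<lambda>(l, r). graph_dec E (g l) (h r)) (graph_enc n E s)) (map_pmf (nm_sim s) D)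
    \<le> max 0 (edge_bias n d E g h / (real d * (real n - real d)))"
proof -
  define F where "F = {x. (g (fst x), h (snd x)) \<in> E}"
  define p where "p s = real (card (graph_code_support n E s \<inter> F)) / real (card (graph_code_support n E s))"
    for s
  have "map_pmf (\<lambda>(l, r). graph_dec E (g l) (h r)) (graph_enc n E s)
      = map_pmf Some (map_pmf (\<lambda>x. x \<in> F) (pmf_of_set (graph_code_support n E s)))" for s
    by (simp add: graph_enc_eq map_pmf_comp graph_dec_def F_def case_prod_unfold)
  also have "\<dots> s = map_pmf Some (bernoulli_pmf (p s))" for s
    unfolding p_def by (simp add: map_pmf_of_set_mem_eq_bernoulli graph_code_support[OF reg d])
  finally have tampered: "map_pmf (\<lambda>(l, r). graph_dec E (g l) (h r)) (graph_enc n E s)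
      = map_pmf Some (bernoulli_pmf (p s))" for s .
  have "0 \<le> p s" "p s \<le> 1" for s
    using graph_code_support(2,3)[OF reg d, of s]
    by (auto simp: p_def divide_le_eq_1 card_gt_0_iff intro: card_mono)
  then obtain D where "\<forall>s. stat_dist (map_pmf Some (bernoulli_pmf (p s))) (map_pmf (nm_sim s) D)
      \<le> max 0 (p False - p True)"
    using bit_tampering_simulation by blast
  moreover have "p False - p True = edge_bias n d E g h / (real d * (real n - real d))"
    unfolding p_def graph_code_support_def F_def using tampered_edge_prob_gap[of n d E g h, OF reg d g h] by simp
  ultimately show ?thesis
    unfolding tampered by auto
qed

lemma graph_code_split_state_nm:
  assumes reg: "regular_graph n d E" and d: "0 < d" "d < n"
    and err: "\<And>g h. (\<And>u. u < n \<Longrightarrow> g u < n) \<Longrightarrow> (\<And>v. v < n \<Longrightarrow> h v < n) \<Longrightarrow>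
      min 1 (max 0 (edge_bias n d E g h / (real d * (real n - real d)))) \<le> eps"
  shows "split_state_nm (graph_enc n E) (graph_dec E) {0..<n} {0..<n} eps"
  unfolding split_state_nm_def
proof (intro conjI allI ballI)
  fix s
  note support = graph_code_support[OF reg d, of s]
  show "set_pmf (graph_enc n E s) \<subseteq> {0..<n} \<times> {0..<n}"
    using support by (simp add: graph_enc_eq)
  have "graph_code_support n E s \<inter> {(l, r). graph_dec E l r = Some s} = graph_code_support n E s"
    by (auto simp: graph_code_support_def graph_dec_def)
  then show "measure_pmf.prob (graph_enc n E s) {(l, r). graph_dec E l r = Some s} = 1"
    using support by (simp add: graph_enc_eq measure_pmf_of_set)
next
  fix g h
  assume "g \<in> {0..<n} \<rightarrow> {0..<n}" "h \<in> {0..<n} \<rightarrow> {0..<n}"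
  then have g: "\<And>u. u < n \<Longrightarrow> g u < n" and h: "\<And>v. v < n \<Longrightarrow> h v < n"
    by auto
  obtain D where D: "\<forall>s. stat_dist (map_pmf (\<lambda>(l, r). graph_dec E (g l) (h r)) (graph_enc n E s))
      (map_pmf (nm_sim s) D) \<le> max 0 (edge_bias n d E g h / (real d * (real n - real d)))"
    using graph_code_tampering[of n d E g h, OF reg d g h] by blast
  have "stat_dist (map_pmf (\<lambda>(l, r). graph_dec E (g l) (h r)) (graph_enc n E s)) (map_pmf (nm_sim s) D)
      \<le> min 1 (max 0 (edge_bias n d E g h / (real d * (real n - real d))))" for s
    using D by (simp add: stat_dist_le_1)
  also have "\<dots> \<le> eps"
    by (rule err[of g h, OF g h])
  finally show "\<exists>D. \<forall>s. stat_dist (map_pmf (\<lambda>(l, r). graph_dec E (g l) (h r)) (graph_enc n E s))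
      (map_pmf (nm_sim s) D) \<le> eps"
    by blast
qed

section \<open>The error bound\<close>

lemma ln_ge_half: "2 \<le> x \<Longrightarrow> 1 / 2 \<le> ln (x :: real)"
  using ln2_ge_two_thirds ln_le_cancel_iff[of 2 x] by linarith

lemma degree_cube_le:
  fixes c d n lam :: real
  assumes c: "0 < c" and d: "2 \<le> d" and lam: "0 < lam" and hyp: "c * d ^ 3 * ln d / lam \<le> n"
  shows "c * d ^ 3 \<le> 2 * (n * lam)"
proof -
  have "c * d ^ 3 * (1 / 2) \<le> c * d ^ 3 * ln d"
    using c d ln_ge_half[OF d] by (intro mult_left_mono) auto
  also have "\<dots> \<le> n * lam"
    using hyp lam by (simp add: divide_le_eq)
  finally show ?thesis by simp
qed

lemma lower_order_terms_le:
  fixes c d n lam :: real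
  assumes c: "0 < c" and d: "2 \<le> d" and lam: "1 / 2 \<le> lam" and cube: "c * d ^ 3 \<le> 2 * (n * lam)"
  shows "d\<^sup>2 + d ^ 3 / lam \<le> 10 / c * (lam * sqrt lam) * n"
proof -
  define \<mu> where "\<mu> = sqrt lam"
  have \<mu>: "1 / 2 \<le> \<mu>"
    using real_sqrt_le_mono[of "1 / 4" lam] lam by (simp add: \<mu>_def real_sqrt_divide)
  have "1 / 2 * 2 \<le> \<mu> * d"
    using \<mu> d by (intro mult_mono) auto
  then have "d\<^sup>2 * 1 \<le> d\<^sup>2 * (\<mu> * d)"
    by (intro mult_left_mono) auto
  moreover have "1 / 2 * (1 / 2) \<le> lam * \<mu>"
    using lam \<mu> by (intro mult_mono) auto
  then have "1 / lam \<le> 4 * \<mu>"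
    using lam by (simp add: divide_le_eq algebra_simps)
  then have "d ^ 3 / lam \<le> 4 * \<mu> * d ^ 3"
    using d mult_right_mono[of "1 / lam" "4 * \<mu>" "d ^ 3"] by simp
  ultimately have "d\<^sup>2 + d ^ 3 / lam \<le> 5 * \<mu> * d ^ 3"
    by (simp add: power2_eq_square power3_eq_cube algebra_simps)
  also have "\<dots> = 5 * \<mu> / c * (c * d ^ 3)"
    using c by simp
  also have "\<dots> \<le> 5 * \<mu> / c * (2 * (n * lam))"
    using cube c \<mu> by (intro mult_left_mono) auto
  finally show ?thesis
    by (simp add: \<mu>_def algebra_simps)
qed

lemma nm_error_le_many_vertices:
  fixes c d n lam G :: real
  assumes c: "0 < c" and d: "2 \<le> d" and lam: "1 / 2 \<le> lam" and n: "2 * d \<le> n"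
    and hyp: "c * d ^ 3 * ln d / lam \<le> n"
    and G: "G \<le> d\<^sup>2 + d ^ 3 / lam + 2 * lam * n * sqrt (2 * lam)"
  shows "G / (d * (n - d)) \<le> (20 / c + 6) * (lam * sqrt lam) / d"
proof -
  have "sqrt 2 \<le> 3 / 2"
    by (rule real_le_lsqrt) (auto simp: power2_eq_square)
  then have "2 * lam * n * sqrt (2 * lam) \<le> 3 * (lam * sqrt lam) * n"
    using lam d n by (simp add: real_sqrt_mult mult_left_mono mult_right_mono algebra_simps)
  moreover have "d\<^sup>2 + d ^ 3 / lam \<le> 10 / c * (lam * sqrt lam) * n"
    using c d lam degree_cube_le[OF c d _ hyp] by (intro lower_order_terms_le) auto
  ultimately have "G \<le> (10 / c + 3) * (lam * sqrt lam) * n"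
    using G by (simp add: algebra_simps)
  also have "\<dots> \<le> (10 / c + 3) * (lam * sqrt lam) * (2 * (n - d))"
    using c lam n by (intro mult_left_mono) auto
  also have "\<dots> = (20 / c + 6) * (lam * sqrt lam) * (n - d)"
    by (simp add: algebra_simps)
  finally have "G / (d * (n - d)) \<le> (20 / c + 6) * (lam * sqrt lam) * (n - d) / (d * (n - d))"
    using d n by (intro divide_right_mono) auto
  also have "\<dots> = (20 / c + 6) * (lam * sqrt lam) / d"
    using d n by simp
  finally show ?thesis .
qed

lemma nm_error_le_few_vertices:
  fixes c d n lam :: real
  assumes c: "0 < c" and d: "2 \<le> d" and lam: "0 < lam" and n: "n < 2 * d"
    and hyp: "c * d ^ 3 * ln d / lam \<le> n"
  shows "1 \<le> 2 / (c * sqrt c) * (lam * sqrt lam) / d"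
proof -
  have "c * d ^ 3 \<le> 2 * (n * lam)"
    by (rule degree_cube_le[OF c d lam hyp])
  also have "\<dots> \<le> 2 * (2 * d * lam)"
    using n lam by (intro mult_left_mono mult_right_mono) auto
  finally have sq: "c * d\<^sup>2 \<le> 4 * lam"
    using d by (simp add: power2_eq_square power3_eq_cube field_simps)
  have "c * d * 2 \<le> c * d * d"
    using c d by (intro mult_left_mono) auto
  also have "\<dots> \<le> 4 * lam"
    using sq by (simp add: power2_eq_square mult.assoc)
  finally have lam_ge: "c * d / 2 \<le> lam" by simp
  have "c * 4 \<le> c * d\<^sup>2"
    using c d mult_mono[of 2 d 2 d] by (intro mult_left_mono) (auto simp: power2_eq_square)
  also have "\<dots> \<le> 4 * lam" by (rule sq)
  finally have "sqrt c \<le> sqrt lam" by simp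
  then have "c * d / 2 * sqrt c \<le> lam * sqrt lam"
    using lam_ge c d by (intro mult_mono) auto
  then show ?thesis
    using c d by (simp add: field_simps)
qed

lemma graph_code_nm_bound:
  assumes c: "0 < c" and reg: "regular_graph n d E" and sp: "spectral_expander n E lam"
    and lam: "0 < lam" and d: "2 \<le> d" "d < n" and hyp: "c * real d ^ 3 * ln (real d) / lam \<le> real n"
  shows "split_state_nm (graph_enc n E) (graph_dec E) {0..<n} {0..<n}
    ((20 / c + 6 + 2 / (c * sqrt c)) * lam powr (3 / 2) / real d)"
proof (rule graph_code_split_state_nm[OF reg _ d(2)])
  fix g h
  assume g: "\<And>u. u < n \<Longrightarrow> g u < n" and h: "\<And>v. v < n \<Longrightarrow> h v < n"
  have "lam powr (3 / 2) = lam powr (1 + 1 / 2)"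
    by simp
  also have "\<dots> = lam * sqrt lam"
    using lam by (simp only: powr_add powr_one powr_half_sqrt less_imp_le)
  finally have powr: "lam powr (3 / 2) = lam * sqrt lam" .
  have C_split: "(20 / c + 6 + 2 / (c * sqrt c)) * lam powr (3 / 2) / real d
      = (20 / c + 6) * (lam * sqrt lam) / real d + 2 / (c * sqrt c) * (lam * sqrt lam) / real d"
    by (simp add: powr distrib_right add_divide_distrib)
  have nonneg: "0 \<le> (20 / c + 6) * (lam * sqrt lam) / real d" "0 \<le> 2 / (c * sqrt c) * (lam * sqrt lam) / real d"
    using c lam by simp_all
  show "min 1 (max 0 (edge_bias n d E g h / (real d * (real n - real d))))
      \<le> (20 / c + 6 + 2 / (c * sqrt c)) * lam powr (3 / 2) / real d"
  proof (cases "2 * d \<le> n")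
    case True
    have "1 - real d / real n \<le> lam"
      using expander_param_lower_bound[OF reg sp] lam d by simp
    moreover have "real d / real n \<le> 1 / 2"
      using True d by (simp add: field_simps)
    ultimately have "1 / 2 \<le> lam" by linarith
    then have "edge_bias n d E g h / (real d * (real n - real d)) \<le> (20 / c + 6) * (lam * sqrt lam) / real d"
      using c d True hyp edge_bias_le[of n d E lam g h, OF reg sp lam g h]
      by (intro nm_error_le_many_vertices) auto
    then have "min 1 (max 0 (edge_bias n d E g h / (real d * (real n - real d))))
        \<le> (20 / c + 6) * (lam * sqrt lam) / real d"
      using nonneg(1) by simp
    then show ?thesis
      unfolding C_split using nonneg(2) by linarith
  next
    case False
    then have "1 \<le> 2 / (c * sqrt c) * (lam * sqrt lam) / real d"
      using c d lam hyp by (intro nm_error_le_few_vertices) auto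
    moreover have "min 1 (max 0 (edge_bias n d E g h / (real d * (real n - real d)))) \<le> 1"
      by simp
    ultimately show ?thesis
      unfolding C_split using nonneg(1) by linarith
  qed
qed (use d in simp)

theorem theoremB1:
  "\<forall>c::real. c > 0 \<longrightarrow> (\<exists>C::real. C > 0 \<and>
     (\<forall>(n::nat) (d::nat) (E::(nat \<times> nat) set) (lam::real).
        regular_graph n d E \<and> 2 \<le> d \<and> d < n \<and> spectral_expander n E lam \<and> lam > 0 \<and>
        real n \<ge> c * real d ^ 3 * ln (real d) / lam
        \<longrightarrow> (\<exists>eps. eps \<le> C * lam powr (3/2) / real d \<and>
               split_state_nm (graph_enc n E) (graph_dec E) {0..<n} {0..<n} eps)))"
proof (intro allI impI)
  fix c :: real
  assume c: "c > 0"
  then have "20 / c + 6 + 2 / (c * sqrt c) > 0"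
    by (simp add: add_pos_pos)
  with graph_code_nm_bound[OF c] show "\<exists>C::real. C > 0 \<and>
     (\<forall>(n::nat) (d::nat) (E::(nat \<times> nat) set) (lam::real).
        regular_graph n d E \<and> 2 \<le> d \<and> d < n \<and> spectral_expander n E lam \<and> lam > 0 \<and>
        real n \<ge> c * real d ^ 3 * ln (real d) / lam
        \<longrightarrow> (\<exists>eps. eps \<le> C * lam powr (3/2) / real d \<and>
               split_state_nm (graph_enc n E) (graph_dec E) {0..<n} {0..<n} eps))"
    by blast
qed

end
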